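(* As $t\to\infty$, $\mathrm{Prob}\big(2\xi(z)<\xi(Z^{(1)}_t)\ \text{for all } z\in\mathbb Z \text{ with } 0<|z-Z^{(1)}_t|\le\alpha\big)\to1$.
   Context: Fix $\alpha\ge 2$. Let $(\xi_0(z))_{z\in\mathbb Z}$ be i.i.d. Pareto with $\mathrm{Prob}(\xi_0(z)>x)=x^{-\alpha}$, $x\ge1$. Let $p:\mathbb N\to[0,1]$ be eventually nondecreasing with $p(n)\to1$, $q=1-p$. Define $\xi(n)=\xi_0(n)$ for $n\ge0$ and, independently for each $n\ge1$, $\xi(-n)=\xi_0(n)$ with probability $p(n)$, $\xi(-n)=\xi_0(-n)$ with probability $q(n)$. Let $D=\{z\in\mathbb N_0:\xi(z)=\xi(-z)\}$, $\Psi_t(z)=\xi(z)-\frac{|z|}{t}\log\xi(z)$, and $Z^{(1)}_t$ a maximiser of $\Psi_t$ over $D$. *)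

theory Defs
  imports "HOL-Probability.Probability"
begin

text \<open>The potential xi(z) built from the i.i.d. field xi0 and the coins:
  for n >= 1, coin n true means xi(-n) = xi0(n) (probability p(n)),
  coin n false means xi(-n) = xi0(-n).\<close>
definition xi :: "(int \<Rightarrow> 'a \<Rightarrow> real) \<Rightarrow> (nat \<Rightarrow> 'a \<Rightarrow> bool) \<Rightarrow> 'a \<Rightarrow> int \<Rightarrow> real" where
  "xi xi0 coin \<omega> z =
     (if z \<ge> 0 then xi0 z \<omega>
      else if coin (nat (- z)) \<omega> then xi0 (- z) \<omega> else xi0 z \<omega>)"

definition Dset :: "(int \<Rightarrow> 'a \<Rightarrow> real) \<Rightarrow> (nat \<Rightarrow> 'a \<Rightarrow> bool) \<Rightarrow> 'a \<Rightarrow> int set" where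
  "Dset xi0 coin \<omega> = {z. z \<ge> 0 \<and> xi xi0 coin \<omega> z = xi xi0 coin \<omega> (- z)}"

definition Psi :: "(int \<Rightarrow> 'a \<Rightarrow> real) \<Rightarrow> (nat \<Rightarrow> 'a \<Rightarrow> bool) \<Rightarrow> real \<Rightarrow> 'a \<Rightarrow> int \<Rightarrow> real" where
  "Psi xi0 coin t \<omega> z = xi xi0 coin \<omega> z - real_of_int \<bar>z\<bar> / t * ln (xi xi0 coin \<omega> z)"

end

theory Submission
  imports Defs "HOL-Real_Asymp.Real_Asymp"
begin

text \<open>
  Let m = (t (ln t)^2)^(1/alpha) and let Z be the maximiser of Psi_t over D. Outside an event of
  small probability:
  (i) some site w <= t (ln t)^3 whose coin shows heads has xi0(w) in (2m, 4m]; such a w lies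
  in D with Psi_t(w) >= m, hence xi(Z) >= Psi_t(Z) >= m;
  (ii) xi0(n) <= n ln m / (2t) for all n > t^2 (ln t)^2, which forces Z <= t^2 (ln t)^2;
  (iii) xi0(i) <= m/2 for all i <= alpha, so Z > alpha and all alpha-neighbours of Z are positive
  sites, where xi = xi0;
  (iv) no two sites below t^2 (ln t)^2 at distance at most alpha both exceed m/4, since a fixed
  pair does so with probability m^(-2 alpha) = (t (ln t)^2)^(-2).
  The failure probabilities of (i)-(iv) are bounded explicitly by functions of t tending to 0.
\<close>

lemma witness_in_Dset_Psi_ge:
  fixes \<xi> :: "int \<Rightarrow> 'a \<Rightarrow> real"
  assumes t: "t > 0" and w: "1 \<le> w" "coin w \<omega>"
    and x: "1 \<le> \<xi> (int w) \<omega>" "2*m < \<xi> (int w) \<omega>" "\<xi> (int w) \<omega> \<le> 4*m"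
    and budget: "real w * ln (4*m) \<le> t*m"
  shows "int w \<in> Dset \<xi> coin \<omega>" "m \<le> Psi \<xi> coin t \<omega> (int w)"
proof -
  show "int w \<in> Dset \<xi> coin \<omega>" using w by (simp add: Dset_def xi_def)
  define x where "x = \<xi> (int w) \<omega>"
  have "real w / t * ln x \<le> real w / t * ln (4*m)"
    using x t by (intro mult_left_mono) (auto simp: x_def)
  also have "\<dots> \<le> m" using budget t by (simp add: divide_simps mult.commute)
  finally show "m \<le> Psi \<xi> coin t \<omega> (int w)"
    using x w by (simp add: Psi_def xi_def x_def)
qed

lemma maximiser_large_and_bounded:
  fixes \<xi> :: "int \<Rightarrow> 'a \<Rightarrow> real"
  assumes t: "t > 0" and m: "m > 1"
    and Z: "zmax \<in> Dset \<xi> coin \<omega>" "1 \<le> \<xi> zmax \<omega>" "m \<le> Psi \<xi> coin t \<omega> zmax"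
    and far: "\<forall>n::nat. N < n \<longrightarrow> \<xi> (int n) \<omega> \<le> real n * (ln m / (2*t))"
  shows "0 \<le> zmax" "m \<le> \<xi> zmax \<omega>" "zmax \<le> int N"
proof -
  show Z0: "0 \<le> zmax" using Z(1) by (simp add: Dset_def)
  define y where "y = \<xi> zmax \<omega>"
  have PZ: "y - real_of_int zmax / t * ln y \<ge> m"
    using Z Z0 by (simp add: Psi_def xi_def y_def)
  moreover have "real_of_int zmax / t * ln y \<ge> 0" using Z(2) Z0 t by (simp add: y_def)
  ultimately show ym: "m \<le> \<xi> zmax \<omega>" unfolding y_def by linarith
  show "zmax \<le> int N"
  proof (rule ccontr)
    assume "\<not> zmax \<le> int N"
    hence ZN: "N < nat zmax" by simp
    have "real_of_int zmax / t * ln m \<le> real_of_int zmax / t * ln y"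
      using ym m Z0 t by (intro mult_left_mono) (auto simp: y_def)
    hence "real_of_int zmax / t * ln m \<le> y" using PZ ym m by (simp add: y_def)
    moreover have "real_of_int zmax * ln m / (2*t) < real_of_int zmax / t * ln m"
      using ZN m t by (simp add: divide_simps)
    ultimately have "real (nat zmax) * (ln m / (2*t)) < \<xi> (int (nat zmax)) \<omega>"
      using Z0 by (simp add: y_def)
    thus False using far ZN by force
  qed
qed

lemma neighbours_of_large_site_small:
  fixes \<xi> :: "int \<Rightarrow> 'a \<Rightarrow> real"
  assumes Z: "0 \<le> zmax" "zmax \<le> int N" "m \<le> \<xi> zmax \<omega>" and m: "m > 0" and \<alpha>: "0 \<le> \<alpha>"
    and near: "\<forall>i::nat. i \<le> nat \<lfloor>\<alpha>\<rfloor> \<longrightarrow> \<xi> (int i) \<omega> \<le> m/2"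
    and apart: "\<forall>i::nat. i \<le> N \<longrightarrow> (\<forall>d\<in>{1..nat \<lfloor>\<alpha>\<rfloor>}.
                  \<xi> (int i) \<omega> \<le> m/4 \<or> \<xi> (int (i+d)) \<omega> \<le> m/4)"
  shows "\<forall>z::int. 0 < \<bar>z - zmax\<bar> \<and> real_of_int \<bar>z - zmax\<bar> \<le> \<alpha> \<longrightarrow>
           2 * xi \<xi> coin \<omega> z < xi \<xi> coin \<omega> zmax"
proof (intro allI impI)
  fix z :: int assume z: "0 < \<bar>z - zmax\<bar> \<and> real_of_int \<bar>z - zmax\<bar> \<le> \<alpha>"
  have "\<not> nat zmax \<le> nat \<lfloor>\<alpha>\<rfloor>" using near Z m by force
  then have "real_of_int zmax > \<alpha>" using Z(1) \<alpha> by linarith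
  then have z0: "z > 0" using z by linarith
  have "\<bar>z - zmax\<bar> \<le> \<lfloor>\<alpha>\<rfloor>" using z by (simp add: le_floor_iff)
  then have dist: "nat \<bar>z - zmax\<bar> \<in> {1..nat \<lfloor>\<alpha>\<rfloor>}" using z by auto
  have xi_eq: "xi \<xi> coin \<omega> z = \<xi> z \<omega>" "xi \<xi> coin \<omega> zmax = \<xi> zmax \<omega>"
    using z0 Z(1) by (simp_all add: xi_def)
  show "2 * xi \<xi> coin \<omega> z < xi \<xi> coin \<omega> zmax"
  proof (rule ccontr)
    assume "\<not> ?thesis"
    hence large: "m/4 < \<xi> z \<omega>" "m/4 < \<xi> zmax \<omega>" using xi_eq Z(3) m by auto
    define i where "i = min z zmax"
    have pair: "{z, zmax} = {i, i + \<bar>z - zmax\<bar>}" by (auto simp: i_def)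
    have "nat i \<le> N" "0 \<le> i" using Z z0 by (auto simp: i_def)
    with apart dist have "\<xi> (int (nat i)) \<omega> \<le> m/4 \<or> \<xi> (int (nat i + nat \<bar>z - zmax\<bar>)) \<omega> \<le> m/4"
      by blast
    moreover have "int (nat i + nat \<bar>z - zmax\<bar>) = i + \<bar>z - zmax\<bar>" using \<open>0 \<le> i\<close> by simp
    ultimately show False using large pair \<open>0 \<le> i\<close> by (metis doubleton_eq_iff int_nat_eq leD)
  qed
qed

lemma neighbours_smaller_if_good:
  fixes \<xi> :: "int \<Rightarrow> 'a \<Rightarrow> real"
  assumes t: "t > 0" and m: "m > 1" and \<alpha>: "0 \<le> \<alpha>"
    and pos: "\<forall>i. 1 \<le> \<xi> i \<omega>"
    and Z: "zmax \<in> Dset \<xi> coin \<omega>" "\<forall>y\<in>Dset \<xi> coin \<omega>. Psi \<xi> coin t \<omega> y \<le> Psi \<xi> coin t \<omega> zmax"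
    and witness: "1 \<le> w" "coin w \<omega>" "2*m < \<xi> (int w) \<omega>" "\<xi> (int w) \<omega> \<le> 4*m"
    and budget: "real w * ln (4*m) \<le> t*m"
    and far: "\<forall>n::nat. N < n \<longrightarrow> \<xi> (int n) \<omega> \<le> real n * (ln m / (2*t))"
    and near: "\<forall>i::nat. i \<le> nat \<lfloor>\<alpha>\<rfloor> \<longrightarrow> \<xi> (int i) \<omega> \<le> m/2"
    and apart: "\<forall>i::nat. i \<le> N \<longrightarrow> (\<forall>d\<in>{1..nat \<lfloor>\<alpha>\<rfloor>}.
                  \<xi> (int i) \<omega> \<le> m/4 \<or> \<xi> (int (i+d)) \<omega> \<le> m/4)"
  shows "\<forall>z::int. 0 < \<bar>z - zmax\<bar> \<and> real_of_int \<bar>z - zmax\<bar> \<le> \<alpha> \<longrightarrow>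
           2 * xi \<xi> coin \<omega> z < xi \<xi> coin \<omega> zmax"
proof -
  from pos have "1 \<le> \<xi> (int w) \<omega>" ..
  note w = witness_in_Dset_Psi_ge[where \<xi>=\<xi> and \<omega>=\<omega> and coin=coin and w=w,
      OF t witness(1,2) this witness(3,4) budget]
  with Z(2) have "m \<le> Psi \<xi> coin t \<omega> zmax" by fastforce
  then have "0 \<le> zmax" "zmax \<le> int N" "m \<le> \<xi> zmax \<omega>"
    using maximiser_large_and_bounded[where \<xi>=\<xi> and \<omega>=\<omega> and coin=coin,
        OF t m Z(1) pos[rule_format] _ far]
    by auto
  moreover have "0 < m" using m by simp
  ultimately show ?thesis
    by (rule neighbours_of_large_site_small[where \<xi>=\<xi> and \<omega>=\<omega> and coin=coin,
          OF _ _ _ _ \<alpha> near apart])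
qed

lemma sum_inverse_squares_tail_le:
  assumes "N \<ge> (1::nat)"
  shows "(\<Sum>n\<in>{N<..<k}. 1 / (real n)^2) \<le> 1 / real N"
proof -
  have telescope: "(\<Sum>n\<in>{N<..<k}. 1 / (real n)^2) \<le> 1 / real N - 1 / max (real N) (real k - 1)"
    for k
  proof (induction k)
    case (Suc k)
    show ?case
    proof (cases "N < k")
      case True
      have "1 / (real k)^2 \<le> 1 / (real k - 1) - 1 / real k"
        using True assms by (simp add: divide_simps power2_eq_square)
      moreover have "{N<..<Suc k} = insert k {N<..<k}" using True by auto
      ultimately show ?thesis using Suc True by (simp add: max_def)
    next
      case False
      then have "{N<..<Suc k} = {}" by auto
      then show ?thesis using False assms by (simp add: max_def)
    qed
  qed simp
  have "0 \<le> 1 / max (real N) (real k - 1)" using assms by simp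
  with telescope[of k] show ?thesis by linarith
qed

definition scale :: "real \<Rightarrow> real \<Rightarrow> real" where
  "scale \<alpha> t = (t * (ln t)^2) powr (1/\<alpha>)"

lemma exp_1_le_imp_pos: "exp 1 \<le> t \<Longrightarrow> 0 < (t::real)"
  using exp_gt_zero[of 1] by linarith

lemma one_le_ln:
  fixes t :: real
  assumes "exp 1 \<le> t"
  shows "1 \<le> ln t"
  using ln_ge_iff exp_1_le_imp_pos[OF assms] assms by blast

lemma le_mult_ln_square:
  fixes t :: real
  assumes "exp 1 \<le> t"
  shows "t \<le> t * (ln t)^2"
proof -
  have "0 < t" using exp_1_le_imp_pos[OF assms] .
  moreover have "1 \<le> (ln t)^2" using one_le_ln[OF assms] by (simp add: one_le_power)
  ultimately show ?thesis using mult_left_mono[of 1 "(ln t)^2" t] by simp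
qed

lemma scale_powr: "\<alpha> > 0 \<Longrightarrow> t > 0 \<Longrightarrow> scale \<alpha> t powr \<alpha> = t * (ln t)^2"
  by (simp add: scale_def powr_powr)

lemma le_scale:
  assumes "\<alpha> > 0" "exp 1 \<le> t" "0 \<le> b" "b powr \<alpha> \<le> t"
  shows "b \<le> scale \<alpha> t"
proof -
  have "t \<le> t * (ln t)^2" using assms le_mult_ln_square by blast
  then have "(b powr \<alpha>) powr (1/\<alpha>) \<le> (t * (ln t)^2) powr (1/\<alpha>)"
    using assms by (intro powr_mono2) auto
  then show ?thesis using assms by (simp add: scale_def powr_powr)
qed

lemma one_le_ln_scale:
  assumes "\<alpha> > 0" "exp 1 \<le> t" "4 powr \<alpha> \<le> t"
  shows "1 \<le> ln (scale \<alpha> t)"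
proof -
  have "4 \<le> scale \<alpha> t" by (rule le_scale) (use assms in auto)
  with exp_le show ?thesis by (intro one_le_ln) linarith
qed

lemma ln_le_alpha_ln_scale:
  assumes "\<alpha> > 0" "exp 1 \<le> t"
  shows "ln t \<le> \<alpha> * ln (scale \<alpha> t)"
proof -
  have t0: "t > 0" using exp_1_le_imp_pos[OF assms(2)] .
  have "t \<le> t * (ln t)^2" using assms le_mult_ln_square by blast
  moreover have "0 < t * (ln t)^2" using t0 one_le_ln[OF assms(2)] by (intro mult_pos_pos) auto
  ultimately have "ln t \<le> ln (t * (ln t)^2)" using t0 by simp
  then show ?thesis using assms by (simp add: scale_def)
qed

lemma witness_budget:
  assumes \<alpha>: "\<alpha> > 0" and t: "exp 1 \<le> t" "4 powr \<alpha> \<le> t" "Y powr \<alpha> \<le> t" and "0 \<le> Y"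
    and Y: "\<forall>y\<ge>Y. \<alpha>^3 * (ln y)^3 * ln (4*y) \<le> y"
  shows "real (nat \<lfloor>t * (ln t)^3\<rfloor>) * ln (4 * scale \<alpha> t) \<le> t * scale \<alpha> t"
proof -
  define m where "m = scale \<alpha> t"
  have m: "4 \<le> m" "Y \<le> m" using le_scale assms unfolding m_def by auto
  have t0: "t > 0" using exp_1_le_imp_pos[OF t(1)] .
  have ln4m: "0 \<le> ln (4*m)" using m by simp
  have "(ln t)^3 \<le> (\<alpha> * ln m)^3"
    using ln_le_alpha_ln_scale[OF \<alpha> t(1)] one_le_ln[OF t(1)] unfolding m_def
    by (intro power_mono) auto
  then have "(ln t)^3 * ln (4*m) \<le> \<alpha>^3 * (ln m)^3 * ln (4*m)"
    using ln4m by (simp add: power_mult_distrib mult_right_mono)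
  also have "\<dots> \<le> m" using Y m by blast
  finally have "t * ((ln t)^3 * ln (4*m)) \<le> t * m" using t0 by (intro mult_left_mono) auto
  moreover have "real (nat \<lfloor>t * (ln t)^3\<rfloor>) * ln (4*m) \<le> t * (ln t)^3 * ln (4*m)"
  proof (intro mult_right_mono of_nat_floor ln4m)
    have "0 \<le> ln t" using one_le_ln[OF t(1)] by linarith
    then show "0 \<le> t * (ln t)^3" using t0 by (metis less_imp_le mult_nonneg_nonneg zero_le_power)
  qed
  ultimately show ?thesis by (simp add: m_def mult.assoc)
qed

definition failure_bound :: "real \<Rightarrow> nat \<Rightarrow> real \<Rightarrow> real" where
  "failure_bound \<alpha> K0 t =
     exp (- ((2 powr (-\<alpha>) - 4 powr (-\<alpha>)) / 2) * ((t * (ln t)^3 - real K0) / (t * (ln t)^2)))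
     + 4 * t^2 / (t^2 * (ln t)^2 - 1)
     + (t^2 * (ln t)^2 + 1) * real (nat \<lfloor>\<alpha>\<rfloor>) * (4 powr \<alpha>)^2 / (t^2 * (ln t)^4)
     + (real (nat \<lfloor>\<alpha>\<rfloor>) + 1) * 2 powr \<alpha> / (t * (ln t)^2)"

lemma failure_bound_tendsto_0:
  assumes "\<alpha> > 0"
  shows "(failure_bound \<alpha> K0 \<longlongrightarrow> 0) at_top"
proof -
  define C where "C = 2 powr (-\<alpha>) - 4 powr (-\<alpha>)"
  have "C > 0" unfolding C_def using assms by (simp add: powr_less_mono2_neg)
  moreover have "filterlim (\<lambda>t::real. (t * (ln t)^3 - real K0) / (t * (ln t)^2)) at_top at_top"
    by real_asymp
  ultimately have "filterlim (\<lambda>t. - (C/2) * ((t * (ln t)^3 - real K0) / (t * (ln t)^2))) at_bot at_top"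
    by (intro filterlim_tendsto_neg_mult_at_bot[OF tendsto_const]) simp_all
  then have "((\<lambda>t. exp (- (C/2) * ((t * (ln t)^3 - real K0) / (t * (ln t)^2)))) \<longlongrightarrow> 0) at_top"
    by (rule filterlim_compose[OF exp_at_bot])
  moreover have "((\<lambda>t::real. 4 * t^2 / (t^2 * (ln t)^2 - 1)) \<longlongrightarrow> 0) at_top"
    by real_asymp
  moreover have "((\<lambda>t::real. (t^2 * (ln t)^2 + 1) * real (nat \<lfloor>\<alpha>\<rfloor>) * (4 powr \<alpha>)^2
      / (t^2 * (ln t)^4)) \<longlongrightarrow> 0) at_top"
    by real_asymp
  moreover have "((\<lambda>t::real. (real (nat \<lfloor>\<alpha>\<rfloor>) + 1) * 2 powr \<alpha> / (t * (ln t)^2)) \<longlongrightarrow> 0) at_top"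
    by real_asymp
  ultimately have "(failure_bound \<alpha> K0 \<longlongrightarrow> 0 + 0 + 0 + 0) at_top"
    unfolding failure_bound_def C_def by (intro tendsto_add)
  then show ?thesis by simp
qed

lemma eventually_ge_half:
  assumes "p \<longlonglongrightarrow> (1::real)"
  obtains K0 :: nat where "1 \<le> K0" "\<forall>n\<ge>K0. 1/2 \<le> p n"
proof -
  have "\<forall>\<^sub>F n in sequentially. 1/2 < p n" by (rule order_tendstoD(1)[OF assms]) simp
  then obtain N0 where "\<forall>n\<ge>N0. 1/2 < p n" unfolding eventually_sequentially by blast
  then show ?thesis by (intro that[of "max 1 N0"]) auto
qed

lemma log_cube_threshold:
  fixes \<alpha> :: real
  assumes "\<alpha> > 0"
  obtains Y where "0 \<le> Y" "\<forall>y\<ge>Y. \<alpha>^3 * (ln y)^3 * ln (4*y) \<le> y"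
proof -
  have "((\<lambda>y::real. (ln y)^3 * ln (4*y) / y) \<longlongrightarrow> 0) at_top" by real_asymp
  then have "\<forall>\<^sub>F y in at_top. (ln y)^3 * ln (4*y) / y < 1 / \<alpha>^3"
    by (rule order_tendstoD(2)) (use assms in simp)
  then have "\<forall>\<^sub>F y in at_top. \<alpha>^3 * (ln y)^3 * ln (4*y) \<le> y"
  proof (rule eventually_mono[OF eventually_conj[OF _ eventually_gt_at_top[of 0]]])
    fix y :: real assume y: "(ln y)^3 * ln (4*y) / y < 1 / \<alpha>^3 \<and> 0 < y"
    then have "(ln y)^3 * ln (4*y) < 1 / \<alpha>^3 * y" using pos_divide_less_eq[of y] by blast
    then have "\<alpha>^3 * ((ln y)^3 * ln (4*y)) < \<alpha>^3 * (1 / \<alpha>^3 * y)"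
      using assms by (intro mult_strict_left_mono) auto
    then show "\<alpha>^3 * (ln y)^3 * ln (4*y) \<le> y" using assms by (simp add: mult.assoc)
  qed
  then obtain Y0 where "\<forall>y\<ge>Y0. \<alpha>^3 * (ln y)^3 * ln (4*y) \<le> y"
    unfolding eventually_at_top_linorder by blast
  then show ?thesis by (intro that[of "max 0 Y0"]) auto
qed

locale pareto_coin_field = prob_space M for M :: "'a measure" +
  fixes \<alpha> :: real and xi0 :: "int \<Rightarrow> 'a \<Rightarrow> real" and coin :: "nat \<Rightarrow> 'a \<Rightarrow> bool"
  assumes alpha: "\<alpha> \<ge> 2"
    and indep: "indep_vars (\<lambda>_. borel)
          (\<lambda>i. case i of Inl z \<Rightarrow> xi0 z | Inr n \<Rightarrow> (\<lambda>\<omega>. of_bool (coin n \<omega>) :: real))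
          (UNIV :: (int + nat) set)"
    and pareto: "\<And>z x. x \<ge> 1 \<Longrightarrow>
          measure M {\<omega> \<in> space M. xi0 z \<omega> > x} = x powr (- \<alpha>)"
begin

lemma alpha_pos: "\<alpha> > 0"
  using alpha by simp

abbreviation X :: "int + nat \<Rightarrow> 'a \<Rightarrow> real" where
  "X \<equiv> (\<lambda>i. case i of Inl z \<Rightarrow> xi0 z | Inr n \<Rightarrow> (\<lambda>\<omega>. of_bool (coin n \<omega>)))"

lemma X_measurable: "X i \<in> borel_measurable M"
  using indep unfolding indep_vars_def2 by auto

lemma xi0_measurable [measurable]: "xi0 z \<in> borel_measurable M"
  using X_measurable[of "Inl z"] by simp

lemma coin_measurable [measurable]: "Measurable.pred M (coin n)"
proof -
  have "{\<omega> \<in> space M. coin n \<omega>} = X (Inr n) -` {1} \<inter> space M" by auto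
  also have "\<dots> \<in> sets M" using X_measurable by (rule measurable_sets) auto
  finally show ?thesis by (simp add: pred_def)
qed

lemma xi_measurable [measurable]: "(\<lambda>\<omega>. xi xi0 coin \<omega> z) \<in> borel_measurable M"
  unfolding xi_def by measurable

lemma indep_sets_X: "indep_sets (\<lambda>i. {X i -` A \<inter> space M | A. A \<in> sets borel}) UNIV"
  using indep unfolding indep_vars_def2 by auto

lemma prob_xi0_greater_pair:
  assumes "i \<noteq> j"
  shows "prob {\<omega> \<in> space M. a < xi0 i \<omega> \<and> b < xi0 j \<omega>} =
         prob {\<omega> \<in> space M. a < xi0 i \<omega>} * prob {\<omega> \<in> space M. b < xi0 j \<omega>}"
proof -
  let ?A = "\<lambda>k. if k = Inl i then X (Inl i) -` {a<..} \<inter> space M else X (Inl j) -` {b<..} \<inter> space M"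
  have "prob (\<Inter>k\<in>{Inl i, Inl j :: int + nat}. ?A k) = (\<Prod>k\<in>{Inl i, Inl j :: int + nat}. prob (?A k))"
    by (rule indep_setsD[OF indep_sets_X]) (auto, (rule exI conjI refl | simp)+)
  moreover have "(\<Inter>k\<in>{Inl i, Inl j :: int + nat}. ?A k) = {\<omega> \<in> space M. a < xi0 i \<omega> \<and> b < xi0 j \<omega>}"
    using assms by auto
  moreover have "X (Inl z) -` {c<..} \<inter> space M = {\<omega> \<in> space M. c < xi0 z \<omega>}" for z c
    by auto
  ultimately show ?thesis using assms by simp
qed

lemma prob_coin_and_xi0_between:
  "prob {\<omega> \<in> space M. coin n \<omega> \<and> a < xi0 (int n) \<omega> \<and> xi0 (int n) \<omega> \<le> b} =
   prob {\<omega> \<in> space M. coin n \<omega>} * prob {\<omega> \<in> space M. a < xi0 (int n) \<omega> \<and> xi0 (int n) \<omega> \<le> b}"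
proof -
  let ?A = "\<lambda>k. if k = Inr n then X (Inr n) -` {1} \<inter> space M else X (Inl (int n)) -` {a<..b} \<inter> space M"
  have "prob (\<Inter>k\<in>{Inr n, Inl (int n)}. ?A k) = (\<Prod>k\<in>{Inr n, Inl (int n)}. prob (?A k))"
    by (rule indep_setsD[OF indep_sets_X]) auto
  moreover have "(\<Inter>k\<in>{Inr n, Inl (int n)}. ?A k) =
      {\<omega> \<in> space M. coin n \<omega> \<and> a < xi0 (int n) \<omega> \<and> xi0 (int n) \<omega> \<le> b}"
    by auto
  moreover have "X (Inr n) -` {1} \<inter> space M = {\<omega> \<in> space M. coin n \<omega>}" by auto
  moreover have "X (Inl (int n)) -` {a<..b} \<inter> space M =
      {\<omega> \<in> space M. a < xi0 (int n) \<omega> \<and> xi0 (int n) \<omega> \<le> b}" by auto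
  ultimately show ?thesis by simp
qed

lemma prob_xi0_between:
  assumes "1 \<le> a" "a \<le> b"
  shows "prob {\<omega> \<in> space M. a < xi0 z \<omega> \<and> xi0 z \<omega> \<le> b} = a powr (-\<alpha>) - b powr (-\<alpha>)"
proof -
  have "{\<omega> \<in> space M. a < xi0 z \<omega> \<and> xi0 z \<omega> \<le> b} =
        {\<omega> \<in> space M. a < xi0 z \<omega>} - {\<omega> \<in> space M. b < xi0 z \<omega>}" by auto
  moreover have "prob ({\<omega> \<in> space M. a < xi0 z \<omega>} - {\<omega> \<in> space M. b < xi0 z \<omega>}) =
     prob {\<omega> \<in> space M. a < xi0 z \<omega>} - prob {\<omega> \<in> space M. b < xi0 z \<omega>}"
    using assms by (intro finite_measure_Diff) auto
  ultimately show ?thesis using assms pareto by simp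
qed

lemma AE_xi0_greater_1: "AE \<omega> in M. \<forall>i. xi0 i \<omega> > 1"
proof (subst AE_all_countable, intro allI)
  fix i
  have "prob {\<omega> \<in> space M. 1 < xi0 i \<omega>} = 1" using pareto[of 1 i] by simp
  from AE_prob_1[OF this] show "AE \<omega> in M. 1 < xi0 i \<omega>" by auto
qed

text \<open>Distinct sites \<open>w\<close> involve the disjoint index blocks \<open>{Inl w, Inr w}\<close>, so the
  corresponding restrictions of the family are independent.\<close>
lemma prob_Inter_no_coin_between:
  assumes J: "finite J" "J \<noteq> {}"
  shows "prob (\<Inter>w\<in>J. {\<omega>\<in>space M. \<not> (coin w \<omega> \<and> a < xi0 (int w) \<omega> \<and> xi0 (int w) \<omega> \<le> b)})
     = (\<Prod>w\<in>J. prob {\<omega>\<in>space M. \<not> (coin w \<omega> \<and> a < xi0 (int w) \<omega> \<and> xi0 (int w) \<omega> \<le> b)})"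
proof -
  define KK where "KK = (\<lambda>w::nat. {Inl (int w), Inr w :: int + nat})"
  define Y where "Y = (\<lambda>j \<omega>. restrict (\<lambda>i. X i \<omega>) (KK j))"
  have "disjoint_family_on KK J" unfolding KK_def disjoint_family_on_def by auto
  then have "indep_vars (\<lambda>j. PiM (KK j) (\<lambda>_. borel)) Y J"
    unfolding Y_def by (intro indep_vars_restrict[OF indep]) auto
  then have indep_Y: "indep_sets (\<lambda>j. {Y j -` A \<inter> space M | A. A \<in> sets (PiM (KK j) (\<lambda>_. borel))}) J"
    unfolding indep_vars_def2 by auto
  define B where "B = (\<lambda>w. {f \<in> space (PiM (KK w) (\<lambda>_. borel)).
       \<not> (f (Inr w) = (1::real) \<and> a < f (Inl (int w)) \<and> f (Inl (int w)) \<le> b)})"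
  have B_sets: "B w \<in> sets (PiM (KK w) (\<lambda>_. borel))" for w
  proof -
    have [measurable]: "(\<lambda>f. f (Inr w)) \<in> borel_measurable (PiM (KK w) (\<lambda>_. borel))"
      by (rule measurable_component_singleton) (simp add: KK_def)
    have [measurable]: "(\<lambda>f. f (Inl (int w))) \<in> borel_measurable (PiM (KK w) (\<lambda>_. borel))"
      by (rule measurable_component_singleton) (simp add: KK_def)
    show ?thesis unfolding B_def by measurable
  qed
  have "Y w -` B w \<inter> space M =
      {\<omega>\<in>space M. \<not> (coin w \<omega> \<and> a < xi0 (int w) \<omega> \<and> xi0 (int w) \<omega> \<le> b)}" for w
    by (auto simp: Y_def B_def KK_def space_PiM)
  moreover have "prob (\<Inter>w\<in>J. Y w -` B w \<inter> space M) = (\<Prod>w\<in>J. prob (Y w -` B w \<inter> space M))"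
    using B_sets by (intro indep_setsD[OF indep_Y]) (auto simp: J)
  ultimately show ?thesis by simp
qed

lemma prob_no_coin_between_le:
  assumes J: "finite J" "J \<noteq> {}" and coin_half: "\<And>w. w \<in> J \<Longrightarrow> prob {\<omega>\<in>space M. coin w \<omega>} \<ge> 1/2"
    and ab: "1 \<le> a" "a \<le> b"
  shows "prob (\<Inter>w\<in>J. {\<omega>\<in>space M. \<not> (coin w \<omega> \<and> a < xi0 (int w) \<omega> \<and> xi0 (int w) \<omega> \<le> b)})
     \<le> exp (- ((a powr (-\<alpha>) - b powr (-\<alpha>)) / 2) * real (card J))"
proof -
  define q where "q = a powr (-\<alpha>) - b powr (-\<alpha>)"
  have q0: "0 \<le> q" unfolding q_def using ab alpha by (intro diff_ge_0_iff_ge[THEN iffD2] powr_mono2') auto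
  have "a powr (-\<alpha>) \<le> a powr 0" using ab alpha by (intro powr_mono) auto
  then have q1: "q \<le> 1" using ab powr_ge_zero[of b "-\<alpha>"] unfolding q_def by (simp del: powr_ge_zero)
  have each: "prob {\<omega>\<in>space M. \<not> (coin w \<omega> \<and> a < xi0 (int w) \<omega> \<and> xi0 (int w) \<omega> \<le> b)} \<le> 1 - q/2"
    if "w \<in> J" for w
  proof -
    have "{\<omega>\<in>space M. \<not> (coin w \<omega> \<and> a < xi0 (int w) \<omega> \<and> xi0 (int w) \<omega> \<le> b)} =
          space M - {\<omega>\<in>space M. coin w \<omega> \<and> a < xi0 (int w) \<omega> \<and> xi0 (int w) \<omega> \<le> b}" by auto
    then have "prob {\<omega>\<in>space M. \<not> (coin w \<omega> \<and> a < xi0 (int w) \<omega> \<and> xi0 (int w) \<omega> \<le> b)} =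
        1 - prob {\<omega>\<in>space M. coin w \<omega>} * q"
      using ab by (simp add: prob_compl prob_coin_and_xi0_between prob_xi0_between q_def)
    moreover have "prob {\<omega>\<in>space M. coin w \<omega>} * q \<ge> 1/2 * q"
      using coin_half[OF that] q0 by (intro mult_right_mono) auto
    ultimately show ?thesis by simp
  qed
  have "prob (\<Inter>w\<in>J. {\<omega>\<in>space M. \<not> (coin w \<omega> \<and> a < xi0 (int w) \<omega> \<and> xi0 (int w) \<omega> \<le> b)})
     = (\<Prod>w\<in>J. prob {\<omega>\<in>space M. \<not> (coin w \<omega> \<and> a < xi0 (int w) \<omega> \<and> xi0 (int w) \<omega> \<le> b)})"
    by (rule prob_Inter_no_coin_between[OF J])
  also have "\<dots> \<le> (1 - q/2) ^ card J"
    using each by (subst prod_constant[symmetric]) (intro prod_mono conjI; simp)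
  also have "\<dots> \<le> (exp (- (q/2))) ^ card J"
    using q1 by (intro power_mono) (auto simp: exp_ge_add_one_self[of "-(q/2)", simplified])
  also have "\<dots> = exp (- (q/2) * real (card J))" by (simp add: exp_of_nat_mult[symmetric] mult.commute)
  finally show ?thesis by (simp add: q_def)
qed

lemma prob_some_xi0_greater_le:
  assumes "c \<ge> 1"
  shows "prob (\<Union>i\<in>{..K::nat}. {\<omega>\<in>space M. c < xi0 (int i) \<omega>}) \<le> (real K + 1) * c powr (-\<alpha>)"
proof -
  have "prob (\<Union>i\<in>{..K}. {\<omega>\<in>space M. c < xi0 (int i) \<omega>}) \<le> (\<Sum>i\<in>{..K}. prob {\<omega>\<in>space M. c < xi0 (int i) \<omega>})"
    by (intro finite_measure_subadditive_finite) auto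
  also have "\<dots> = (real K + 1) * c powr (-\<alpha>)" using pareto assms by simp
  finally show ?thesis .
qed

lemma prob_close_pair_greater_le:
  assumes "c \<ge> 1"
  shows "prob (\<Union>(i,d)\<in>{..N::nat}\<times>{1..K::nat}. {\<omega>\<in>space M. c < xi0 (int i) \<omega> \<and> c < xi0 (int (i+d)) \<omega>})
     \<le> (real N + 1) * real K * (c powr (-\<alpha>))^2"
proof -
  define A where "A = (\<lambda>(i::nat, d::nat). {\<omega>\<in>space M. c < xi0 (int i) \<omega> \<and> c < xi0 (int (i+d)) \<omega>})"
  have "prob (\<Union>x\<in>{..N}\<times>{1..K}. A x) \<le> (\<Sum>x\<in>{..N}\<times>{1..K}. prob (A x))"
    by (rule finite_measure_subadditive_finite) (auto simp: A_def)
  also have "\<dots> = (\<Sum>x\<in>{..N}\<times>{1..K}. (c powr (-\<alpha>))^2)"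
  proof (intro sum.cong refl)
    fix x assume "x \<in> {..N}\<times>{1..K}"
    then obtain i d where x: "x = (i,d)" "1 \<le> d" by auto
    then have "int i \<noteq> int (i+d)" by simp
    then show "prob (A x) = (c powr (-\<alpha>))^2"
      using x pareto assms by (simp add: A_def prob_xi0_greater_pair power2_eq_square)
  qed
  also have "\<dots> = (real N + 1) * real K * (c powr (-\<alpha>))^2" by (simp add: algebra_simps)
  finally show ?thesis by (simp add: A_def)
qed

lemma prob_far_xi0_greater_linear_le:
  assumes c: "c > 0" and N: "N \<ge> (1::nat)" and Nc: "(real N + 1) * c \<ge> 1"
  shows "prob (\<Union>n\<in>{N<..}. {\<omega>\<in>space M. real n * c < xi0 (int n) \<omega>}) \<le> 1 / (c^2 * real N)"
proof -
  define A where "A = (\<lambda>n::nat. if N < n then {\<omega>\<in>space M. real n * c < xi0 (int n) \<omega>} else {})"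
  define g where "g = (\<lambda>n::nat. if N < n then 1 / (c^2 * (real n)^2) else 0)"
  have A_g: "prob (A n) \<le> g n" for n
  proof (cases "N < n")
    case True
    have "(real N + 1) * c \<le> real n * c" using True c by (intro mult_right_mono) auto
    then have ge1: "real n * c \<ge> 1" using Nc by linarith
    have "(real n * c) powr (-\<alpha>) \<le> (real n * c) powr (-2)"
      using ge1 alpha by (intro powr_mono) auto
    also have "\<dots> = 1 / (c^2 * (real n)^2)"
      using ge1 by (simp add: powr_minus powr_realpow divide_simps power_mult_distrib mult.commute)
    finally show ?thesis using True ge1 pareto by (simp add: A_def g_def)
  qed (simp add: A_def g_def)
  have g_partial: "(\<Sum>n<k. g n) \<le> 1 / (c^2 * real N)" for k
  proof -
    have "(\<Sum>n<k. g n) = (1/c^2) * (\<Sum>n\<in>{N<..<k}. 1 / (real n)^2)"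
      by (auto simp: g_def sum_distrib_left sum.inter_filter[symmetric] intro!: sum.cong)
    also have "\<dots> \<le> (1/c^2) * (1 / real N)"
      by (intro mult_left_mono sum_inverse_squares_tail_le N) simp
    finally show ?thesis by simp
  qed
  have g_summable: "summable g" by (rule summableI_nonneg_bounded[OF _ g_partial]) (simp add: g_def)
  have A_summable: "summable (\<lambda>n. prob (A n))"
    by (rule summable_comparison_test'[OF g_summable]) (use A_g in auto)
  have "(\<Union>n\<in>{N<..}. {\<omega>\<in>space M. real n * c < xi0 (int n) \<omega>}) = (\<Union>n. A n)"
    by (auto simp: A_def split: if_splits)
  moreover have "prob (\<Union>n. A n) \<le> (\<Sum>n. prob (A n))"
    by (rule finite_measure_subadditive_countably[OF _ A_summable]) (auto simp: A_def)
  moreover have "\<dots> \<le> (\<Sum>n. g n)" by (rule suminf_le[OF A_g A_summable g_summable])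
  moreover have "\<dots> \<le> 1 / (c^2 * real N)" by (rule suminf_le_const[OF g_summable g_partial])
  ultimately show ?thesis by simp
qed

definition no_witness :: "nat \<Rightarrow> real \<Rightarrow> 'a set" where
  "no_witness K0 t = (\<Inter>w\<in>{K0..nat \<lfloor>t * (ln t)^3\<rfloor>}. {\<omega>\<in>space M.
     \<not> (coin w \<omega> \<and> 2 * scale \<alpha> t < xi0 (int w) \<omega> \<and> xi0 (int w) \<omega> \<le> 4 * scale \<alpha> t)})"

definition far_exceedance :: "real \<Rightarrow> 'a set" where
  "far_exceedance t = (\<Union>n\<in>{nat \<lfloor>t^2 * (ln t)^2\<rfloor><..}.
     {\<omega>\<in>space M. real n * (ln (scale \<alpha> t) / (2*t)) < xi0 (int n) \<omega>})"

definition close_pair_exceedance :: "real \<Rightarrow> 'a set" where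
  "close_pair_exceedance t = (\<Union>(i,d)\<in>{..nat \<lfloor>t^2 * (ln t)^2\<rfloor>}\<times>{1..nat \<lfloor>\<alpha>\<rfloor>}.
     {\<omega>\<in>space M. scale \<alpha> t / 4 < xi0 (int i) \<omega> \<and> scale \<alpha> t / 4 < xi0 (int (i+d)) \<omega>})"

definition near_origin_exceedance :: "real \<Rightarrow> 'a set" where
  "near_origin_exceedance t = (\<Union>i\<in>{..nat \<lfloor>\<alpha>\<rfloor>}. {\<omega>\<in>space M. scale \<alpha> t / 2 < xi0 (int i) \<omega>})"

definition bad_event :: "nat \<Rightarrow> real \<Rightarrow> 'a set" where
  "bad_event K0 t = no_witness K0 t \<union> far_exceedance t \<union> close_pair_exceedance t
     \<union> near_origin_exceedance t"

lemma prob_no_witness_le: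
  assumes t: "exp 1 \<le> t" "4 powr \<alpha> \<le> t" "real K0 + 1 \<le> t"
    and coin_half: "\<forall>n\<ge>K0. prob {\<omega>\<in>space M. coin n \<omega>} \<ge> 1/2"
  shows "prob (no_witness K0 t)
     \<le> exp (- ((2 powr (-\<alpha>) - 4 powr (-\<alpha>)) / 2) * ((t * (ln t)^3 - real K0) / (t * (ln t)^2)))"
proof -
  define m where "m = scale \<alpha> t"
  define C where "C = 2 powr (-\<alpha>) - 4 powr (-\<alpha>)"
  define N' where "N' = nat \<lfloor>t * (ln t)^3\<rfloor>"
  define J where "J = {K0..N'}"
  have t0: "t > 0" using exp_1_le_imp_pos[OF t(1)] .
  have L1: "1 \<le> ln t" using one_le_ln[OF t(1)] .
  have m4: "4 \<le> m" unfolding m_def using alpha_pos t by (intro le_scale) auto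
  have "t \<le> t * (ln t)^3" using L1 t0 by (simp add: one_le_power)
  moreover have N': "t * (ln t)^3 - 1 \<le> real N'" unfolding N'_def using t0 by linarith
  ultimately have "K0 \<le> N'" using t(3) by linarith
  then have card_J: "t * (ln t)^3 - real K0 \<le> real (card J)" "J \<noteq> {}"
    using N' by (auto simp: J_def of_nat_diff)
  have m_neg: "m powr (-\<alpha>) = 1 / (t * (ln t)^2)"
    by (simp only: m_def powr_minus_divide scale_powr[OF alpha_pos t0])
  have "prob (\<Inter>w\<in>J. {\<omega>\<in>space M. \<not> (coin w \<omega> \<and> 2*m < xi0 (int w) \<omega> \<and> xi0 (int w) \<omega> \<le> 4*m)})
      \<le> exp (- (((2*m) powr (-\<alpha>) - (4*m) powr (-\<alpha>)) / 2) * real (card J))"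
    using card_J m4 coin_half by (intro prob_no_coin_between_le) (simp_all add: J_def)
  also have "(2*m) powr (-\<alpha>) - (4*m) powr (-\<alpha>) = C / (t * (ln t)^2)"
    using m4 by (simp add: powr_mult m_neg C_def diff_divide_distrib)
  also have "exp (- (C / (t * (ln t)^2) / 2) * real (card J))
      \<le> exp (- (C / 2) * ((t * (ln t)^3 - real K0) / (t * (ln t)^2)))"
  proof -
    have "0 \<le> C" unfolding C_def using alpha_pos by (intro diff_ge_0_iff_ge[THEN iffD2] powr_mono2') auto
    then have "C / (t * (ln t)^2) / 2 * (t * (ln t)^3 - real K0)
        \<le> C / (t * (ln t)^2) / 2 * real (card J)"
      using card_J t0 by (intro mult_left_mono) auto
    then show ?thesis by simp
  qed
  finally show ?thesis by (simp only: no_witness_def m_def C_def J_def N'_def)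
qed

lemma prob_far_exceedance_le:
  assumes t: "exp 1 \<le> t" "4 powr \<alpha> \<le> t"
  shows "prob (far_exceedance t) \<le> 4 * t^2 / (t^2 * (ln t)^2 - 1)"
proof -
  define N where "N = nat \<lfloor>t^2 * (ln t)^2\<rfloor>"
  define c where "c = ln (scale \<alpha> t) / (2*t)"
  have t2: "2 \<le> t" using t(1) exp_ge_add_one_self[of 1] by linarith
  have L1: "1 \<le> ln t" using one_le_ln[OF t(1)] .
  have lnm: "1 \<le> ln (scale \<alpha> t)" using one_le_ln_scale[OF alpha_pos t] .
  have "2^2 * 1 \<le> t^2 * (ln t)^2" using t2 L1 by (intro mult_mono power_mono) (auto simp: one_le_power)
  then have tL: "4 \<le> t^2 * (ln t)^2" by simp
  then have N: "t^2 * (ln t)^2 - 1 \<le> real N" "real N \<le> t^2 * (ln t)^2"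
    unfolding N_def by linarith+
  have c0: "c > 0" unfolding c_def using lnm t2 by simp
  have "t^2 * (ln t)^2 * c \<le> (real N + 1) * c" using N c0 by (intro mult_right_mono) auto
  moreover have "t^2 * (ln t)^2 * c = t * (ln t)^2 * ln (scale \<alpha> t) / 2"
    unfolding c_def using t2 by (simp add: power2_eq_square)
  moreover have "2 * 1 * 1 \<le> t * (ln t)^2 * ln (scale \<alpha> t)"
    using t2 L1 lnm by (intro mult_mono) (auto simp: one_le_power)
  ultimately have "1 \<le> (real N + 1) * c" by linarith
  then have "prob (\<Union>n\<in>{N<..}. {\<omega>\<in>space M. real n * c < xi0 (int n) \<omega>}) \<le> 1 / (c^2 * real N)"
    using c0 N tL by (intro prob_far_xi0_greater_linear_le) auto
  also have "1 / (c^2 * real N) = 4 * t^2 / ((ln (scale \<alpha> t))^2 * real N)"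
    unfolding c_def using t2 by (simp add: power2_eq_square divide_simps)
  also have "\<dots> \<le> 4 * t^2 / real N"
  proof (rule divide_left_mono)
    have N0: "0 < real N" using N tL by linarith
    have "1 \<le> (ln (scale \<alpha> t))^2" using lnm by (simp add: one_le_power)
    then show "real N \<le> (ln (scale \<alpha> t))^2 * real N"
      using N0 mult_right_mono[of 1 "(ln (scale \<alpha> t))^2" "real N"] by simp
    have "0 < (ln (scale \<alpha> t))^2" using lnm by (intro zero_less_power) linarith
    then show "0 < (ln (scale \<alpha> t))^2 * real N * real N" using N0 by (intro mult_pos_pos)
  qed simp
  also have "\<dots> \<le> 4 * t^2 / (t^2 * (ln t)^2 - 1)"
  proof (rule divide_left_mono)
    show "0 < real N * (t^2 * (ln t)^2 - 1)" using N tL by (intro mult_pos_pos) linarith+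
  qed (use N in simp_all)
  finally show ?thesis by (simp only: far_exceedance_def N_def c_def)
qed

lemma prob_close_pair_exceedance_le:
  assumes t: "exp 1 \<le> t" "4 powr \<alpha> \<le> t"
  shows "prob (close_pair_exceedance t)
     \<le> (t^2 * (ln t)^2 + 1) * real (nat \<lfloor>\<alpha>\<rfloor>) * (4 powr \<alpha>)^2 / (t^2 * (ln t)^4)"
proof -
  define m where "m = scale \<alpha> t"
  define N where "N = nat \<lfloor>t^2 * (ln t)^2\<rfloor>"
  have t0: "t > 0" using exp_1_le_imp_pos[OF t(1)] .
  have m4: "4 \<le> m" unfolding m_def using alpha_pos t by (intro le_scale) auto
  have m_pow: "m powr \<alpha> = t * (ln t)^2" unfolding m_def using scale_powr[OF alpha_pos t0] .
  have N: "real N \<le> t^2 * (ln t)^2" unfolding N_def by (intro of_nat_floor) simp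
  have "prob (\<Union>(i,d)\<in>{..N}\<times>{1..nat \<lfloor>\<alpha>\<rfloor>}. {\<omega>\<in>space M. m/4 < xi0 (int i) \<omega> \<and> m/4 < xi0 (int (i+d)) \<omega>})
      \<le> (real N + 1) * real (nat \<lfloor>\<alpha>\<rfloor>) * ((m/4) powr (-\<alpha>))^2"
    using m4 by (intro prob_close_pair_greater_le) auto
  also have "(m/4) powr (-\<alpha>) = 4 powr \<alpha> / (t * (ln t)^2)"
    using m4 by (simp add: powr_divide m_pow powr_minus_divide)
  also have "(real N + 1) * real (nat \<lfloor>\<alpha>\<rfloor>) * (4 powr \<alpha> / (t * (ln t)^2))^2
      \<le> (t^2 * (ln t)^2 + 1) * real (nat \<lfloor>\<alpha>\<rfloor>) * (4 powr \<alpha> / (t * (ln t)^2))^2"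
    using N by (intro mult_right_mono) simp_all
  also have "\<dots> = (t^2 * (ln t)^2 + 1) * real (nat \<lfloor>\<alpha>\<rfloor>) * (4 powr \<alpha>)^2 / (t^2 * (ln t)^4)"
    by (simp add: power_divide power_mult_distrib)
  finally show ?thesis by (simp only: close_pair_exceedance_def m_def N_def)
qed

lemma prob_near_origin_exceedance_le:
  assumes t: "exp 1 \<le> t" "4 powr \<alpha> \<le> t"
  shows "prob (near_origin_exceedance t) \<le> (real (nat \<lfloor>\<alpha>\<rfloor>) + 1) * 2 powr \<alpha> / (t * (ln t)^2)"
proof -
  have t0: "t > 0" using exp_1_le_imp_pos[OF t(1)] .
  have m4: "4 \<le> scale \<alpha> t" using alpha_pos t by (intro le_scale) auto
  from m4 have "prob (\<Union>i\<in>{..nat \<lfloor>\<alpha>\<rfloor>}. {\<omega>\<in>space M. scale \<alpha> t / 2 < xi0 (int i) \<omega>})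
      \<le> (real (nat \<lfloor>\<alpha>\<rfloor>) + 1) * (scale \<alpha> t / 2) powr (-\<alpha>)"
    by (intro prob_some_xi0_greater_le) auto
  also have "(scale \<alpha> t / 2) powr (-\<alpha>) = 2 powr \<alpha> / (t * (ln t)^2)"
    using m4 by (simp add: powr_divide scale_powr[OF alpha_pos t0] powr_minus_divide)
  finally show ?thesis unfolding near_origin_exceedance_def by simp
qed

lemma bad_event_sets_prob_le:
  assumes t: "exp 1 \<le> t" "4 powr \<alpha> \<le> t" "real K0 + 1 \<le> t"
    and coin_half: "\<forall>n\<ge>K0. prob {\<omega>\<in>space M. coin n \<omega>} \<ge> 1/2"
  shows "bad_event K0 t \<in> sets M" "prob (bad_event K0 t) \<le> failure_bound \<alpha> K0 t"
proof -
  have "t \<le> t * (ln t)^3" using one_le_ln[OF t(1)] exp_1_le_imp_pos[OF t(1)] by (simp add: one_le_power)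
  then have "K0 \<le> nat \<lfloor>t * (ln t)^3\<rfloor>" using t(3) by linarith
  then have sets: "no_witness K0 t \<in> sets M" "far_exceedance t \<in> sets M"
      "close_pair_exceedance t \<in> sets M" "near_origin_exceedance t \<in> sets M"
    unfolding no_witness_def far_exceedance_def close_pair_exceedance_def near_origin_exceedance_def
    by (auto intro!: sets.finite_INT sets.countable_UN' sets.finite_UN)
  then show "bad_event K0 t \<in> sets M" unfolding bad_event_def by auto
  have "prob (bad_event K0 t) \<le> prob (no_witness K0 t) + prob (far_exceedance t)
      + prob (close_pair_exceedance t) + prob (near_origin_exceedance t)"
    unfolding bad_event_def using sets
    by (smt (verit) measure_Un_le sets.Un)
  also have "\<dots> \<le> failure_bound \<alpha> K0 t"
    using prob_no_witness_le[OF t coin_half] prob_far_exceedance_le[OF t(1,2)]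
      prob_close_pair_exceedance_le[OF t(1,2)] prob_near_origin_exceedance_le[OF t(1,2)]
    unfolding failure_bound_def by linarith
  finally show "prob (bad_event K0 t) \<le> failure_bound \<alpha> K0 t" .
qed

lemma neighbours_smaller_off_bad_event:
  fixes Z :: "'a \<Rightarrow> int"
  assumes K0: "1 \<le> K0"
    and Y: "0 \<le> Y" "\<forall>y\<ge>Y. \<alpha>^3 * (ln y)^3 * ln (4*y) \<le> y"
    and t: "exp 1 \<le> t" "4 powr \<alpha> \<le> t" "Y powr \<alpha> \<le> t"
    and Z_max: "AE \<omega> in M. Z \<omega> \<in> Dset xi0 coin \<omega> \<and>
          (\<forall>y \<in> Dset xi0 coin \<omega>. Psi xi0 coin t \<omega> y \<le> Psi xi0 coin t \<omega> (Z \<omega>))"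
  shows "AE \<omega> in M. \<omega> \<in> space M - bad_event K0 t \<longrightarrow> (\<forall>z::int.
             0 < \<bar>z - Z \<omega>\<bar> \<and> real_of_int \<bar>z - Z \<omega>\<bar> \<le> \<alpha> \<longrightarrow>
               2 * xi xi0 coin \<omega> z < xi xi0 coin \<omega> (Z \<omega>))"
  using AE_xi0_greater_1 Z_max
proof eventually_elim
  case (elim \<omega>)
  define m where "m = scale \<alpha> t"
  define N where "N = nat \<lfloor>t^2 * (ln t)^2\<rfloor>"
  have m4: "4 \<le> m" unfolding m_def using alpha_pos t by (intro le_scale) auto
  show ?case
  proof
    assume good: "\<omega> \<in> space M - bad_event K0 t"
    then obtain w where w: "K0 \<le> w" "w \<le> nat \<lfloor>t * (ln t)^3\<rfloor>"
        "coin w \<omega>" "2*m < xi0 (int w) \<omega>" "xi0 (int w) \<omega> \<le> 4*m"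
      unfolding bad_event_def no_witness_def m_def by auto
    have "real w * ln (4*m) \<le> real (nat \<lfloor>t * (ln t)^3\<rfloor>) * ln (4*m)"
      using w m4 by (intro mult_right_mono) auto
    also have "\<dots> \<le> t * m" unfolding m_def using witness_budget[OF alpha_pos t Y] .
    finally have "real w * ln (4*m) \<le> t * m" .
    moreover have "\<forall>i. 1 \<le> xi0 i \<omega>" using elim by (auto simp: less_imp_le)
    moreover have "\<forall>n::nat. N < n \<longrightarrow> xi0 (int n) \<omega> \<le> real n * (ln m / (2*t))"
      using good unfolding bad_event_def far_exceedance_def m_def N_def by (auto simp: not_less)
    moreover have "\<forall>i::nat. i \<le> nat \<lfloor>\<alpha>\<rfloor> \<longrightarrow> xi0 (int i) \<omega> \<le> m/2"
      using good unfolding bad_event_def near_origin_exceedance_def m_def by (auto simp: not_less)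
    moreover have "\<forall>i::nat. i \<le> N \<longrightarrow> (\<forall>d\<in>{1..nat \<lfloor>\<alpha>\<rfloor>}.
        xi0 (int i) \<omega> \<le> m/4 \<or> xi0 (int (i+d)) \<omega> \<le> m/4)"
    proof (intro allI impI ballI)
      fix i d assume "i \<le> N" "d \<in> {1..nat \<lfloor>\<alpha>\<rfloor>}"
      then have "\<omega> \<notin> {\<omega>\<in>space M. m / 4 < xi0 (int i) \<omega> \<and> m / 4 < xi0 (int (i+d)) \<omega>}"
        using good unfolding bad_event_def close_pair_exceedance_def m_def N_def by blast
      then show "xi0 (int i) \<omega> \<le> m/4 \<or> xi0 (int (i+d)) \<omega> \<le> m/4" using good by auto
    qed
    ultimately show "\<forall>z::int. 0 < \<bar>z - Z \<omega>\<bar> \<and> real_of_int \<bar>z - Z \<omega>\<bar> \<le> \<alpha> \<longrightarrow>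
        2 * xi xi0 coin \<omega> z < xi xi0 coin \<omega> (Z \<omega>)"
      using elim w K0 m4 alpha exp_1_le_imp_pos[OF t(1)]
      by (intro neighbours_smaller_if_good[where w=w and N=N]) auto
  qed
qed

lemma prob_neighbours_smaller_ge:
  fixes Z :: "'a \<Rightarrow> int"
  assumes K0: "1 \<le> K0" "\<forall>n\<ge>K0. prob {\<omega>\<in>space M. coin n \<omega>} \<ge> 1/2"
    and Y: "0 \<le> Y" "\<forall>y\<ge>Y. \<alpha>^3 * (ln y)^3 * ln (4*y) \<le> y"
    and t: "exp 1 \<le> t" "4 powr \<alpha> \<le> t" "Y powr \<alpha> \<le> t" "real K0 + 1 \<le> t"
    and Z_meas: "Z \<in> M \<rightarrow>\<^sub>M count_space UNIV"
    and Z_max: "AE \<omega> in M. Z \<omega> \<in> Dset xi0 coin \<omega> \<and>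
          (\<forall>y \<in> Dset xi0 coin \<omega>. Psi xi0 coin t \<omega> y \<le> Psi xi0 coin t \<omega> (Z \<omega>))"
  shows "1 - failure_bound \<alpha> K0 t \<le> prob {\<omega> \<in> space M. \<forall>z::int.
             0 < \<bar>z - Z \<omega>\<bar> \<and> real_of_int \<bar>z - Z \<omega>\<bar> \<le> \<alpha> \<longrightarrow>
               2 * xi xi0 coin \<omega> z < xi xi0 coin \<omega> (Z \<omega>)}" (is "_ \<le> prob ?T")
proof -
  note bad = bad_event_sets_prob_le[OF t(1,2,4) K0(2)]
  have "(\<lambda>\<omega>. (\<lambda>i \<omega>. \<forall>z::int. 0 < \<bar>z - i\<bar> \<and> real_of_int \<bar>z - i\<bar> \<le> \<alpha> \<longrightarrow>
           2 * xi xi0 coin \<omega> z < xi xi0 coin \<omega> i) (Z \<omega>) \<omega>) \<in> M \<rightarrow>\<^sub>M count_space UNIV"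
    by (rule measurable_compose_countable'[OF _ Z_meas]) auto
  then have "?T \<in> sets M" by (simp add: pred_def)
  then have "prob (space M - bad_event K0 t) \<le> prob ?T"
    using neighbours_smaller_off_bad_event[OF K0(1) Y t(1-3) Z_max] bad
    by (intro finite_measure_mono_AE) auto
  then show ?thesis using bad prob_compl[of "bad_event K0 t"] by simp
qed

end

theorem lemma6p2:
  fixes M :: "'a measure" and \<alpha> :: real
    and xi0 :: "int \<Rightarrow> 'a \<Rightarrow> real" and coin :: "nat \<Rightarrow> 'a \<Rightarrow> bool"
    and p :: "nat \<Rightarrow> real" and Z1 :: "real \<Rightarrow> 'a \<Rightarrow> int"
  assumes "prob_space M"
    and alpha: "\<alpha> \<ge> 2"
    and p_range: "\<And>n. 0 \<le> p n \<and> p n \<le> 1"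
    and p_mono: "\<exists>N. \<forall>m n. N \<le> m \<and> m \<le> n \<longrightarrow> p m \<le> p n"
    and p_lim: "p \<longlonglongrightarrow> 1"
    and indep: "prob_space.indep_vars M (\<lambda>_. borel)
          (\<lambda>i. case i of Inl z \<Rightarrow> xi0 z | Inr n \<Rightarrow> (\<lambda>\<omega>. of_bool (coin n \<omega>) :: real))
          (UNIV :: (int + nat) set)"
    and pareto: "\<And>z x. x \<ge> 1 \<Longrightarrow>
          measure M {\<omega> \<in> space M. xi0 z \<omega> > x} = x powr (- \<alpha>)"
    and coin_prob: "\<And>n. n \<ge> 1 \<Longrightarrow> measure M {\<omega> \<in> space M. coin n \<omega>} = p n"
    and Z1_meas: "\<And>t. t > 0 \<Longrightarrow> Z1 t \<in> M \<rightarrow>\<^sub>M count_space UNIV"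
    and Z1_max: "\<And>t. t > 0 \<Longrightarrow> AE \<omega> in M. Z1 t \<omega> \<in> Dset xi0 coin \<omega> \<and>
          (\<forall>y \<in> Dset xi0 coin \<omega>. Psi xi0 coin t \<omega> y \<le> Psi xi0 coin t \<omega> (Z1 t \<omega>))"
  shows "((\<lambda>t. measure M {\<omega> \<in> space M. \<forall>z::int.
             0 < \<bar>z - Z1 t \<omega>\<bar> \<and> real_of_int \<bar>z - Z1 t \<omega>\<bar> \<le> \<alpha> \<longrightarrow>
               2 * xi xi0 coin \<omega> z < xi xi0 coin \<omega> (Z1 t \<omega>)})
          \<longlongrightarrow> 1) at_top"
proof -
  interpret pareto_coin_field M \<alpha> xi0 coin
    by (intro pareto_coin_field.intro pareto_coin_field_axioms.intro) (simp_all add: assms)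
  obtain K0 where K0: "1 \<le> K0" "\<forall>n\<ge>K0. 1/2 \<le> p n" using eventually_ge_half[OF p_lim] .
  then have coin_half: "\<forall>n\<ge>K0. prob {\<omega>\<in>space M. coin n \<omega>} \<ge> 1/2" using coin_prob by simp
  obtain Y where Y: "0 \<le> Y" "\<forall>y\<ge>Y. \<alpha>^3 * (ln y)^3 * ln (4*y) \<le> y"
    using log_cube_threshold[OF alpha_pos] .
  define T0 where "T0 = max (max (exp 1) (4 powr \<alpha>)) (max (Y powr \<alpha>) (real K0 + 1))"
  have lower: "\<forall>\<^sub>F t in at_top. 1 - failure_bound \<alpha> K0 t \<le> measure M {\<omega> \<in> space M. \<forall>z::int.
             0 < \<bar>z - Z1 t \<omega>\<bar> \<and> real_of_int \<bar>z - Z1 t \<omega>\<bar> \<le> \<alpha> \<longrightarrow>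
               2 * xi xi0 coin \<omega> z < xi xi0 coin \<omega> (Z1 t \<omega>)}"
    (is "\<forall>\<^sub>F t in at_top. _ \<le> ?P t")
    using eventually_ge_at_top[of T0]
  proof eventually_elim
    case (elim t)
    then have t: "exp 1 \<le> t" "4 powr \<alpha> \<le> t" "Y powr \<alpha> \<le> t" "real K0 + 1 \<le> t"
      unfolding T0_def by simp_all
    then have t0: "t > 0" using exp_1_le_imp_pos by blast
    show ?case
      by (rule prob_neighbours_smaller_ge[OF K0(1) coin_half Y t Z1_meas[OF t0] Z1_max[OF t0]])
  qed
  have upper: "\<forall>\<^sub>F t in at_top. ?P t \<le> 1"
    by (intro always_eventually allI prob_le_1)
  have "((\<lambda>t. 1 - failure_bound \<alpha> K0 t) \<longlongrightarrow> 1 - 0) at_top"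
    by (intro tendsto_diff tendsto_const failure_bound_tendsto_0[OF alpha_pos])
  then show ?thesis using tendsto_sandwich[OF lower upper _ tendsto_const] by simp
qed

end
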